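(* Let $q\in(0,1)$ and let $w\ge 2$ be an integer. Consider a clique of size $w$ with vertices $u,1,2,\dots,w-1$, where $u$ (the parent of the clique) is initially active and $1,\dots,w-1$ (the children inside the clique) are initially inactive. For $1\le i\le w-1$, vertex $i$ has, besides the $w-1$ other clique vertices, exactly $X_i$ further neighbors (its own children), which are inactive and remain inactive throughout; thus vertex $i$ has degree $X_i+w-1$. The contagion evolves in discrete time: an inactive vertex $i$ becomes active as soon as its proportion of active neighbors is strictly greater than $q$, and active vertices remain active. Let $L$ be the final number of active vertices among $1,\dots,w-1$, and let $X_{(1)}\le X_{(2)}\le\dots\le X_{(w-1)}$ be the order statistics of $(X_i)_{1\le i\le w-1}$. Then $$L=\min\Big\{i\in\{1,\dots,w-1\}\;\Big|\;\lfloor q(X_{(i)}+w-1)\rfloor+1>i\Big\}-1,$$ with the convention $L=w-1$ if this set is empty (i.e. if $\lfloor q(X_{(i)}+w-1)\rfloor+1\le i$ for all $1\le i\le w-1$).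
   Context: The $X_i$ are nonnegative integers. In the paper's setting, this clique is a clique of the random graph obtained as the one-mode projection of an alternating branching process, and $X_i$ is the number of children of vertex $i$ in that graph. *)

theory Defs
  imports Main "HOL.Real"
begin

text \<open>Clique vertices: parent u (always active) and children 1..w-1.
  Child i has degree X i + w - 1: u, the other w-2 children, and X i own children
  (which stay inactive).\<close>

definition clique_step :: "real \<Rightarrow> nat \<Rightarrow> (nat \<Rightarrow> nat) \<Rightarrow> nat set \<Rightarrow> nat set" where
  "clique_step q w X A = A \<union>
     {i \<in> {1..<w}. i \<notin> A \<and>
        real (1 + card (A - {i})) / real (X i + w - 1) > q}"

primrec clique_active :: "real \<Rightarrow> nat \<Rightarrow> (nat \<Rightarrow> nat) \<Rightarrow> nat \<Rightarrow> nat set" where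
  "clique_active q w X 0 = {}"
| "clique_active q w X (Suc t) = clique_step q w X (clique_active q w X t)"

definition final_active :: "real \<Rightarrow> nat \<Rightarrow> (nat \<Rightarrow> nat) \<Rightarrow> nat" where
  "final_active q w X = card (\<Union>t. clique_active q w X t)"

definition order_stat :: "nat \<Rightarrow> (nat \<Rightarrow> nat) \<Rightarrow> nat \<Rightarrow> nat" where
  "order_stat w X i = sort (map X [1..<w]) ! (i - 1)"

end

theory Submission
  imports Defs
begin

text \<open>A child with \<open>x\<close> own children has degree \<open>x + w - 1\<close>; it is activated as soon as \<open>m\<close>
  other children are active iff \<open>(m + 1) / (x + w - 1) > q\<close>, i.e. iff \<open>threshold q w x \<le> m\<close>.
  Hence every round activates exactly the children whose threshold is at most the current
  number of active children, and the count evolves by iterating the monotone map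
  \<open>m \<mapsto> #{i. threshold q w (X i) \<le> m}\<close> from \<open>0\<close>. The process stops at the least \<open>m\<close> with
  \<open>#{i. threshold q w (X i) \<le> m} \<le> m\<close>, and for thresholds sorted increasingly this is the
  first \<open>m\<close> at which the \<open>(m+1)\<close>-st smallest threshold exceeds \<open>m\<close>.\<close>

lemma funpow_le_prefixpoint:
  fixes g :: "nat \<Rightarrow> nat"
  assumes "mono g" and "g r \<le> r"
  shows "(g ^^ k) 0 \<le> r"
proof (induction k)
  case (Suc k)
  then have "g ((g ^^ k) 0) \<le> g r" using assms(1) by (simp add: monoD)
  then show ?case using assms(2) by simp
qed simp

lemma funpow_reaches_least_prefixpoint:
  fixes g :: "nat \<Rightarrow> nat"
  assumes "mono g" and "g r \<le> r" and below: "\<And>m. m < r \<Longrightarrow> m < g m" and "r \<le> k"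
  shows "(g ^^ k) 0 = r"
proof -
  have "min j r \<le> (g ^^ j) 0" for j
  proof (induction j)
    case (Suc j)
    show ?case
    proof (cases "(g ^^ j) 0 < r")
      case True
      then show ?thesis using Suc below[of "(g ^^ j) 0"] by simp
    next
      case False
      then have "(g ^^ j) 0 = r" using funpow_le_prefixpoint[OF assms(1,2), of j] by simp
      moreover have "r \<le> g r"
        using below[of "r - 1"] monoD[OF assms(1), of "r - 1" r] by (cases r) auto
      ultimately show ?thesis by simp
    qed
  qed simp
  from this[of k] show ?thesis using funpow_le_prefixpoint[OF assms(1,2), of k] assms(4) by simp
qed

lemma length_filter_sorted_le_iff:
  fixes ys :: "'a::linorder list"
  assumes "sorted ys" and downward_closed: "\<And>x y. x \<le> y \<Longrightarrow> P y \<Longrightarrow> P x"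
  shows "length (filter P ys) \<le> m \<longleftrightarrow> (m < length ys \<longrightarrow> \<not> P (ys ! m))"
proof -
  let ?I = "{i. i < length ys \<and> P (ys ! i)}"
  have length_eq: "length (filter P ys) = card ?I"
    by (rule length_filter_conv_card)
  consider "length ys \<le> m" | "m < length ys" "P (ys ! m)" | "m < length ys" "\<not> P (ys ! m)"
    by linarith
  then show ?thesis
  proof cases
    case 1
    then show ?thesis by (metis le_trans length_filter_le not_le)
  next
    case 2
    have "{..m} \<subseteq> ?I"
      using 2 assms(1) by (auto simp: sorted_iff_nth_mono intro: downward_closed)
    then have "Suc m \<le> card ?I"
      using card_mono[of ?I "{..m}"] by simp
    then show ?thesis using 2 length_eq by simp
  next
    case 3
    have "?I \<subseteq> {..<m}"
    proof
      fix i assume "i \<in> ?I"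
      then show "i \<in> {..<m}"
        using 3 assms(1) downward_closed[of "ys ! m" "ys ! i"]
        by (cases "m \<le> i") (auto simp: sorted_iff_nth_mono)
    qed
    then have "card ?I \<le> m"
      using card_mono[of "{..<m}" ?I] by simp
    then show ?thesis using 3 length_eq by simp
  qed
qed

lemma Least_Suc_mem_eq:
  fixes S :: "nat set"
  assumes "S \<subseteq> {1..n}"
  shows "(LEAST m. m < n \<longrightarrow> Suc m \<in> S) = (if S = {} then n else Min S - 1)"
proof (cases "S = {}")
  case True
  then show ?thesis by (intro Least_equality) auto
next
  case False
  have "finite S" using assms finite_subset by blast
  then have "Min S \<in> S" and min_le: "\<And>i. i \<in> S \<Longrightarrow> Min S \<le> i"
    using False by simp_all
  then have "1 \<le> Min S" "Min S \<le> n" using assms by auto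
  then show ?thesis
    using False \<open>Min S \<in> S\<close> min_le by (intro Least_equality) (auto, fastforce)
qed

definition threshold :: "real \<Rightarrow> nat \<Rightarrow> nat \<Rightarrow> nat" where
  "threshold q w x = nat \<lfloor>q * real (x + w - 1)\<rfloor>"

definition activated_by :: "real \<Rightarrow> nat \<Rightarrow> (nat \<Rightarrow> nat) \<Rightarrow> nat \<Rightarrow> nat set" where
  "activated_by q w X m = {i \<in> {1..<w}. threshold q w (X i) \<le> m}"

lemma threshold_mono:
  assumes "0 \<le> q"
  shows "mono (threshold q w)"
  unfolding threshold_def
  by (rule monoI) (use assms in \<open>auto intro!: nat_mono floor_mono mult_left_mono\<close>)

lemma activated_by_mono: "m \<le> m' \<Longrightarrow> activated_by q w X m \<subseteq> activated_by q w X m'"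
  unfolding activated_by_def by auto

lemma finite_activated_by [simp]: "finite (activated_by q w X m)"
  unfolding activated_by_def by simp

lemma activation_iff_threshold:
  assumes "i \<in> {1..<w}" and "i \<notin> A"
  shows "real (1 + card (A - {i})) / real (X i + w - 1) > q \<longleftrightarrow> threshold q w (X i) \<le> card A"
proof -
  have "A - {i} = A" using assms(2) by auto
  moreover have "real (X i + w - 1) > 0" using assms(1) by simp
  ultimately have "real (1 + card (A - {i})) / real (X i + w - 1) > q
      \<longleftrightarrow> q * real (X i + w - 1) < real (card A) + 1"
    by (simp add: pos_less_divide_eq mult.commute add.commute)
  also have "\<dots> \<longleftrightarrow> threshold q w (X i) \<le> card A"
    unfolding threshold_def by (simp add: floor_le_iff nat_le_iff)
  finally show ?thesis .
qed

lemma clique_step_eq_activated_by: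
  assumes "A \<subseteq> activated_by q w X (card A)"
  shows "clique_step q w X A = activated_by q w X (card A)"
  using assms activation_iff_threshold[of _ w A q X]
  unfolding clique_step_def activated_by_def by auto

lemma clique_active_Suc:
  "clique_active q w X (Suc k) = activated_by q w X (card (clique_active q w X k))"
proof (induction k)
  case 0
  show ?case by (simp add: clique_step_eq_activated_by)
next
  case (Suc k)
  let ?A = "clique_active q w X"
  have "?A k \<subseteq> ?A (Suc k)"
    unfolding clique_active.simps(2) clique_step_def by blast
  then have "card (?A k) \<le> card (?A (Suc k))"
    unfolding Suc by (intro card_mono) simp_all
  then have "?A (Suc k) \<subseteq> activated_by q w X (card (?A (Suc k)))"
    unfolding Suc by (rule activated_by_mono)
  then show ?case
    unfolding clique_active.simps(2)[of q w X "Suc k"] by (rule clique_step_eq_activated_by)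
qed

lemma card_clique_active:
  "card (clique_active q w X k) = ((\<lambda>m. card (activated_by q w X m)) ^^ k) 0"
  by (induction k) (simp_all only: clique_active_Suc clique_active.simps(1) card.empty funpow.simps
      comp_apply id_apply)

lemma final_active_eq_Least:
  "final_active q w X = (LEAST m. card (activated_by q w X m) \<le> m)"
proof -
  define g where "g = (\<lambda>m. card (activated_by q w X m))"
  define r where "r = (LEAST m. g m \<le> m)"
  have "activated_by q w X (w - 1) \<subseteq> {1..<w}"
    unfolding activated_by_def by blast
  then have "g (w - 1) \<le> w - 1"
    unfolding g_def using card_mono[of "{1..<w}"] by simp
  then have r_fix: "g r \<le> r"
    unfolding r_def by (rule LeastI)
  have below: "m < g m" if "m < r" for m
    using not_less_Least[OF that[unfolded r_def]] by simp
  have g_mono: "mono g"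
    unfolding g_def by (rule monoI) (simp add: activated_by_mono card_mono)
  have bounded: "(g ^^ k) 0 \<le> r" for k
    using funpow_le_prefixpoint[OF g_mono r_fix] .
  have reached: "(g ^^ k) 0 = r" if "r \<le> k" for k
    using funpow_reaches_least_prefixpoint[OF g_mono r_fix below that] .
  have iterate: "clique_active q w X (Suc k) = activated_by q w X ((g ^^ k) 0)" for k
    unfolding clique_active_Suc card_clique_active g_def ..
  have "(\<Union>k. clique_active q w X k) = activated_by q w X r"
  proof (intro equalityI subsetI)
    fix i assume "i \<in> (\<Union>k. clique_active q w X k)"
    then obtain k where "i \<in> clique_active q w X k" by blast
    moreover have "k \<noteq> 0" using calculation by (intro notI) simp
    ultimately obtain j where "i \<in> activated_by q w X ((g ^^ j) 0)"
      using iterate by (metis not0_implies_Suc)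
    then show "i \<in> activated_by q w X r"
      using activated_by_mono[OF bounded] by blast
  next
    fix i assume "i \<in> activated_by q w X r"
    then have "i \<in> clique_active q w X (Suc r)"
      unfolding iterate reached[OF order_refl] .
    then show "i \<in> (\<Union>k. clique_active q w X k)" by blast
  qed
  then have "final_active q w X = g r"
    unfolding final_active_def g_def by simp
  also have "\<dots> = (g ^^ Suc r) 0"
    using reached[OF order_refl] by simp
  also have "\<dots> = r"
    by (rule reached) simp
  finally show ?thesis
    unfolding r_def g_def .
qed

lemma card_activated_by_le_iff:
  assumes "0 \<le> q"
  shows "card (activated_by q w X m) \<le> m
    \<longleftrightarrow> (m < w - 1 \<longrightarrow> m < threshold q w (order_stat w X (Suc m)))"
proof -
  let ?ys = "sort (map X [1..<w])"
  have "card (activated_by q w X m) = length (filter (\<lambda>i. threshold q w (X i) \<le> m) [1..<w])"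
    unfolding activated_by_def by (subst distinct_length_filter) (simp_all add: Int_def conj_commute)
  also have "\<dots> = length (filter (\<lambda>x. threshold q w x \<le> m) ?ys)"
    by (simp add: filter_map comp_def filter_sort)
  finally have "card (activated_by q w X m) \<le> m
      \<longleftrightarrow> (m < length ?ys \<longrightarrow> \<not> threshold q w (?ys ! m) \<le> m)"
    using length_filter_sorted_le_iff[of ?ys "\<lambda>x. threshold q w x \<le> m" m]
      monoD[OF threshold_mono[OF assms]] order_trans by (metis sorted_sort)
  then show ?thesis
    by (simp add: order_stat_def not_le)
qed

theorem lemma1:
  fixes q :: real and w :: nat and X :: "nat \<Rightarrow> nat"
  assumes "0 < q" and "q < 1" and "w \<ge> 2"
  defines "S \<equiv> {i \<in> {1..w-1}. \<lfloor>q * real (order_stat w X i + w - 1)\<rfloor> + 1 > int i}"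
  shows "final_active q w X = (if S = {} then w - 1 else Min S - 1)"
proof -
  have S_Suc: "Suc m \<in> S \<longleftrightarrow> m < w - 1 \<and> m < threshold q w (order_stat w X (Suc m))" for m
    unfolding S_def threshold_def by auto
  have "final_active q w X = (LEAST m. card (activated_by q w X m) \<le> m)"
    by (rule final_active_eq_Least)
  also have "\<dots> = (LEAST m. m < w - 1 \<longrightarrow> Suc m \<in> S)"
    using card_activated_by_le_iff[of q w X] assms(1) S_Suc by simp
  also have "\<dots> = (if S = {} then w - 1 else Min S - 1)"
    by (rule Least_Suc_mem_eq) (auto simp: S_def)
  finally show ?thesis .
qed

end
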